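(* Let $\mathfrak S=(S,\xrightarrow{F},\le)$ be a complete functional transition system and $\mathcal A=(F,Q,\delta,q_0)$ an rl-automaton on the alphabet $F$. Then $(\mathfrak S\times\mathcal A,\pi_1)$ is a continuous flattening of $\mathfrak S$.
   Context: Complete functional transition system: $(S,\le)$ is a well partial order which is a continuous dcpo; $F$ is a finite set of partial continuous maps (Scott-open domain, $f(\bigvee D)=\bigvee f(D)$ for directed $D\subseteq\operatorname{dom}f$); $s\to f(s)$. rl-automaton: a deterministic finite automaton $(F,Q,\delta,q_0)$ with finite state set $Q$, initial state $q_0$, partial transition function $\delta:Q\times F\rightharpoonup Q$, all states final, whose language is of the form $\operatorname{Pfx}(w_1^*w_2^*\cdots w_k^* )$ (the prefixes of words of $w_1^*\cdots w_k^*$) for some $w_1,\dots,w_k\in F^*$. Synchronized product $\mathfrak S\times\mathcal A$: states $S\times Q$, order $(s,q)\le'(s',q')$ iff $s\le s'$ and $q=q'$; transitions given by the partial maps $f\bowtie\delta:(s,q)\mapsto(f(s),\delta(q,f))$ (defined iff $s\in\operatorname{dom}f$ and $\delta(q,f)$ is defined), one for each $f\in F$ such that $\delta(q,f)$ is defined for some $q\in Q$. $\pi_1$ maps $(s,q)$ to $s$ and $f\bowtie\delta$ to $f$. A functional transition system is flat if there are finitely many words $w_1,\dots,w_k$ over its set of transition maps such that every fireable sequence of transitions lies in $w_1^*\cdots w_k^*$. A morphism $\varphi$ maps states to states and transition maps to transition maps so that $s\in\operatorname{dom}f_1$, $s'=f_1(s)$ imply $\varphi(s)\in\operatorname{dom}\varphi(f_1)$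 and $\varphi(s')=\varphi(f_1)(\varphi(s))$. A continuous flattening of $\mathfrak S$ is a pair $(\mathfrak S_1,\varphi)$ with $\mathfrak S_1$ a flat complete functional transition system and $\varphi:\mathfrak S_1\to\mathfrak S$ a morphism whose state map is Scott-continuous. *)

theory Defs
  imports Main
begin

record ('s, 'l) fts =
  states :: "'s set"
  le     :: "'s \<Rightarrow> 's \<Rightarrow> bool"
  trans  :: "'l set"
  app    :: "'l \<Rightarrow> 's \<Rightarrow> 's option"

definition partial_order_on :: "'s set \<Rightarrow> ('s \<Rightarrow> 's \<Rightarrow> bool) \<Rightarrow> bool" where
  "partial_order_on S r \<longleftrightarrow>
     (\<forall>x\<in>S. r x x) \<and>
     (\<forall>x\<in>S. \<forall>y\<in>S. r x y \<and> r y x \<longrightarrow> x = y) \<and>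
     (\<forall>x\<in>S. \<forall>y\<in>S. \<forall>z\<in>S. r x y \<and> r y z \<longrightarrow> r x z)"

definition wpo_on :: "'s set \<Rightarrow> ('s \<Rightarrow> 's \<Rightarrow> bool) \<Rightarrow> bool" where
  "wpo_on S r \<longleftrightarrow> partial_order_on S r \<and>
     (\<forall>x :: nat \<Rightarrow> 's. (\<forall>n. x n \<in> S) \<longrightarrow> (\<exists>i j. i < j \<and> r (x i) (x j)))"

definition directed_in :: "'s set \<Rightarrow> ('s \<Rightarrow> 's \<Rightarrow> bool) \<Rightarrow> 's set \<Rightarrow> bool" where
  "directed_in S r D \<longleftrightarrow> D \<subseteq> S \<and> D \<noteq> {} \<and>
     (\<forall>x\<in>D. \<forall>y\<in>D. \<exists>z\<in>D. r x z \<and> r y z)"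

definition is_lub_in :: "'s set \<Rightarrow> ('s \<Rightarrow> 's \<Rightarrow> bool) \<Rightarrow> 's set \<Rightarrow> 's \<Rightarrow> bool" where
  "is_lub_in S r D x \<longleftrightarrow> x \<in> S \<and> (\<forall>y\<in>D. r y x) \<and>
     (\<forall>z\<in>S. (\<forall>y\<in>D. r y z) \<longrightarrow> r x z)"

definition dcpo_on :: "'s set \<Rightarrow> ('s \<Rightarrow> 's \<Rightarrow> bool) \<Rightarrow> bool" where
  "dcpo_on S r \<longleftrightarrow> partial_order_on S r \<and>
     (\<forall>D. directed_in S r D \<longrightarrow> (\<exists>x. is_lub_in S r D x))"

definition way_below :: "'s set \<Rightarrow> ('s \<Rightarrow> 's \<Rightarrow> bool) \<Rightarrow> 's \<Rightarrow> 's \<Rightarrow> bool" where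
  "way_below S r x y \<longleftrightarrow>
     (\<forall>D d. directed_in S r D \<longrightarrow> is_lub_in S r D d \<longrightarrow> r y d \<longrightarrow> (\<exists>z\<in>D. r x z))"

definition continuous_dcpo_on :: "'s set \<Rightarrow> ('s \<Rightarrow> 's \<Rightarrow> bool) \<Rightarrow> bool" where
  "continuous_dcpo_on S r \<longleftrightarrow> dcpo_on S r \<and>
     (\<forall>x\<in>S. directed_in S r {y\<in>S. way_below S r y x} \<and>
             is_lub_in S r {y\<in>S. way_below S r y x} x)"

definition scott_open_in :: "'s set \<Rightarrow> ('s \<Rightarrow> 's \<Rightarrow> bool) \<Rightarrow> 's set \<Rightarrow> bool" where
  "scott_open_in S r U \<longleftrightarrow> U \<subseteq> S \<and>
     (\<forall>x\<in>U. \<forall>y\<in>S. r x y \<longrightarrow> y \<in> U) \<and>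
     (\<forall>D d. directed_in S r D \<longrightarrow> is_lub_in S r D d \<longrightarrow> d \<in> U \<longrightarrow> D \<inter> U \<noteq> {})"

definition pdom :: "('s \<Rightarrow> 's option) \<Rightarrow> 's set" where
  "pdom f = {s. f s \<noteq> None}"

definition partial_continuous_on :: "'s set \<Rightarrow> ('s \<Rightarrow> 's \<Rightarrow> bool) \<Rightarrow> ('s \<Rightarrow> 's option) \<Rightarrow> bool" where
  "partial_continuous_on S r f \<longleftrightarrow>
     scott_open_in S r (pdom f) \<and>
     (\<forall>s\<in>pdom f. the (f s) \<in> S) \<and>
     (\<forall>D d. directed_in S r D \<longrightarrow> D \<subseteq> pdom f \<longrightarrow> is_lub_in S r D d \<longrightarrow>
        is_lub_in S r ((\<lambda>s. the (f s)) ` D) (the (f d)))"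

definition scott_continuous_map ::
  "'s set \<Rightarrow> ('s \<Rightarrow> 's \<Rightarrow> bool) \<Rightarrow> 't set \<Rightarrow> ('t \<Rightarrow> 't \<Rightarrow> bool) \<Rightarrow> ('s \<Rightarrow> 't) \<Rightarrow> bool" where
  "scott_continuous_map S r T r' g \<longleftrightarrow> g ` S \<subseteq> T \<and>
     (\<forall>D d. directed_in S r D \<longrightarrow> is_lub_in S r D d \<longrightarrow> is_lub_in T r' (g ` D) (g d))"

definition complete_fts :: "('s, 'l) fts \<Rightarrow> bool" where
  "complete_fts \<Sigma> \<longleftrightarrow>
     wpo_on (states \<Sigma>) (le \<Sigma>) \<and> continuous_dcpo_on (states \<Sigma>) (le \<Sigma>) \<and>
     finite (trans \<Sigma>) \<and>
     (\<forall>f\<in>trans \<Sigma>. partial_continuous_on (states \<Sigma>) (le \<Sigma>) (app \<Sigma> f))"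

fun run :: "('l \<Rightarrow> 's \<Rightarrow> 's option) \<Rightarrow> 'l list \<Rightarrow> 's \<Rightarrow> 's option" where
  "run a [] s = Some s"
| "run a (f # w) s = (case a f s of None \<Rightarrow> None | Some s' \<Rightarrow> run a w s')"

definition fireable :: "('s, 'l) fts \<Rightarrow> 'l list \<Rightarrow> bool" where
  "fireable \<Sigma> w \<longleftrightarrow> set w \<subseteq> trans \<Sigma> \<and> (\<exists>s\<in>states \<Sigma>. run (app \<Sigma>) w s \<noteq> None)"

text \<open>w \<in> ws!0^* ws!1^* ... ws!(k-1)^*\<close>
definition in_stars :: "'l list list \<Rightarrow> 'l list \<Rightarrow> bool" where
  "in_stars ws w \<longleftrightarrow> (\<exists>ns :: nat list. length ns = length ws \<and>
      w = concat (map (\<lambda>(u, n). concat (replicate n u)) (zip ws ns)))"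

definition flat :: "('s, 'l) fts \<Rightarrow> bool" where
  "flat \<Sigma> \<longleftrightarrow> (\<exists>ws. set (concat ws) \<subseteq> trans \<Sigma> \<and>
      (\<forall>w. fireable \<Sigma> w \<longrightarrow> in_stars ws w))"

definition fts_morphism :: "('s, 'l) fts \<Rightarrow> ('t, 'm) fts \<Rightarrow> ('s \<Rightarrow> 't) \<Rightarrow> ('l \<Rightarrow> 'm) \<Rightarrow> bool" where
  "fts_morphism \<Sigma>1 \<Sigma>2 \<phi>s \<phi>l \<longleftrightarrow>
     \<phi>s ` states \<Sigma>1 \<subseteq> states \<Sigma>2 \<and> \<phi>l ` trans \<Sigma>1 \<subseteq> trans \<Sigma>2 \<and>
     (\<forall>f\<in>trans \<Sigma>1. \<forall>s\<in>states \<Sigma>1. \<forall>s'. app \<Sigma>1 f s = Some s' \<longrightarrow>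
        app \<Sigma>2 (\<phi>l f) (\<phi>s s) = Some (\<phi>s s'))"

definition continuous_flattening ::
  "('t, 'm) fts \<Rightarrow> ('s \<Rightarrow> 't) \<Rightarrow> ('l \<Rightarrow> 'm) \<Rightarrow> ('s, 'l) fts \<Rightarrow> bool" where
  "continuous_flattening \<Sigma> \<phi>s \<phi>l \<Sigma>1 \<longleftrightarrow>
     flat \<Sigma>1 \<and> complete_fts \<Sigma>1 \<and> fts_morphism \<Sigma>1 \<Sigma> \<phi>s \<phi>l \<and>
     scott_continuous_map (states \<Sigma>1) (le \<Sigma>1) (states \<Sigma>) (le \<Sigma>) \<phi>s"

fun drun :: "('q \<Rightarrow> 'l \<Rightarrow> 'q option) \<Rightarrow> 'q \<Rightarrow> 'l list \<Rightarrow> 'q option" where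
  "drun \<delta> q [] = Some q"
| "drun \<delta> q (f # w) = (case \<delta> q f of None \<Rightarrow> None | Some q' \<Rightarrow> drun \<delta> q' w)"

text \<open>Deterministic automaton over alphabet F with states Q, all final; language = Pfx(w1^* ... wk^*).\<close>
definition rl_automaton :: "'l set \<Rightarrow> 'q set \<Rightarrow> ('q \<Rightarrow> 'l \<Rightarrow> 'q option) \<Rightarrow> 'q \<Rightarrow> bool" where
  "rl_automaton F Q \<delta> q0 \<longleftrightarrow>
     finite Q \<and> q0 \<in> Q \<and>
     (\<forall>q f q'. \<delta> q f = Some q' \<longrightarrow> q \<in> Q \<and> f \<in> F \<and> q' \<in> Q) \<and>
     (\<forall>q\<in>Q. \<exists>w. drun \<delta> q0 w = Some q) \<and>
     (\<exists>ws. set (concat ws) \<subseteq> F \<and>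
        (\<forall>w. set w \<subseteq> F \<longrightarrow> (drun \<delta> q0 w \<noteq> None \<longleftrightarrow> (\<exists>v. in_stars ws (w @ v)))))"

definition sync_product :: "('s, 'l) fts \<Rightarrow> 'q set \<Rightarrow> ('q \<Rightarrow> 'l \<Rightarrow> 'q option) \<Rightarrow> ('s \<times> 'q, 'l) fts" where
  "sync_product \<Sigma> Q \<delta> =
     \<lparr> states = states \<Sigma> \<times> Q,
       le = (\<lambda>(s, q) (s', q'). le \<Sigma> s s' \<and> q = q'),
       trans = {f \<in> trans \<Sigma>. \<exists>q\<in>Q. \<delta> q f \<noteq> None},
       app = (\<lambda>f (s, q). case app \<Sigma> f s of None \<Rightarrow> None
                | Some s' \<Rightarrow> (case \<delta> q f of None \<Rightarrow> None | Some q' \<Rightarrow> Some (s', q'))) \<rparr>"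

end

theory Submission
  imports Defs "HOL-Library.Sublist" "HOL-Library.Infinite_Set"
begin

text \<open>
  The order of the product never relates different automaton states, so a directed subset of
  \<open>S \<times> Q\<close> lies in a single copy \<open>S \<times> {q}\<close>: all order-theoretic structure (lubs, way-below,
  Scott-open sets, continuity of the transitions and of the projection) is inherited copy by copy
  from \<open>S\<close>, and the well partial order survives because \<open>Q\<close> is finite (pigeonhole).

  For flatness, a sequence fireable in the product from \<open>(s, q)\<close> is read by the automaton from
  the reachable state \<open>q\<close>, hence is a factor of a word in \<open>w\<^sub>1\<^sup>* \<dots> w\<^sub>k\<^sup>*\<close>.
  A factor of \<open>u\<^sup>n\<close> has the form \<open>x u\<^sup>m y\<close> with \<open>x\<close>, \<open>y\<close> factors of \<open>u\<close>, so all such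
  factors lie in the bounded language obtained by surrounding each \<open>w\<^sub>i\<^sup>*\<close> with the finitely many
  factors of \<open>w\<^sub>i\<close>.
\<close>

lemma in_stars_Nil [simp]: "in_stars [] w \<longleftrightarrow> w = []"
  unfolding in_stars_def by auto

lemma in_stars_Cons:
  "in_stars (u # ws) w \<longleftrightarrow> (\<exists>n v. w = concat (replicate n u) @ v \<and> in_stars ws v)"
proof
  assume "in_stars (u # ws) w"
  then obtain ns where "length ns = Suc (length ws)"
    and "w = concat (map (\<lambda>(u, n). concat (replicate n u)) (zip (u # ws) ns))"
    unfolding in_stars_def by auto
  then show "\<exists>n v. w = concat (replicate n u) @ v \<and> in_stars ws v"
    unfolding in_stars_def by (cases ns) auto
next
  assume "\<exists>n v. w = concat (replicate n u) @ v \<and> in_stars ws v"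
  then obtain n ns where "length ns = length ws"
    and "w = concat (replicate n u) @ concat (map (\<lambda>(u, n). concat (replicate n u)) (zip ws ns))"
    unfolding in_stars_def by blast
  then show "in_stars (u # ws) w"
    unfolding in_stars_def by (intro exI[of _ "n # ns"]) auto
qed

lemma in_stars_empty_word: "in_stars ws []"
  by (induction ws) (auto simp: in_stars_Cons intro: exI[of _ 0])

lemma in_stars_append: "in_stars ws x \<Longrightarrow> in_stars vs y \<Longrightarrow> in_stars (ws @ vs) (x @ y)"
proof (induction ws arbitrary: x)
  case (Cons u ws)
  then obtain n v where "x = concat (replicate n u) @ v" "in_stars ws v"
    by (auto simp: in_stars_Cons)
  with Cons show ?case
    unfolding append_Cons in_stars_Cons by (intro exI[of _ n] exI[of _ "v @ y"]) simp
qed simp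

lemma in_stars_member: "u \<in> set ws \<Longrightarrow> in_stars ws u"
proof (induction ws)
  case (Cons v ws)
  show ?case
  proof (cases "u = v")
    case True
    then show ?thesis
      unfolding in_stars_Cons by (intro exI[of _ 1] exI[of _ "[]"]) (simp add: in_stars_empty_word)
  next
    case False
    with Cons show ?thesis
      unfolding in_stars_Cons by (intro exI[of _ 0] exI[of _ u]) simp
  qed
qed simp

lemma in_stars_power: "in_stars [u] (concat (replicate n u))"
  unfolding in_stars_Cons by (intro exI[of _ n] exI[of _ "[]"]) simp

lemma in_stars_filter:
  assumes "in_stars ws w" and "set w \<subseteq> A"
  shows "in_stars (filter (\<lambda>u. set u \<subseteq> A) ws) w"
  using assms
proof (induction ws arbitrary: w)
  case (Cons u ws)
  then obtain n v where w: "w = concat (replicate n u) @ v" and v: "in_stars ws v"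
    by (auto simp: in_stars_Cons)
  have "in_stars (filter (\<lambda>u. set u \<subseteq> A) ws) v"
    using Cons.IH[OF v] Cons.prems(2) w by simp
  moreover have "n = 0" if "\<not> set u \<subseteq> A"
    using that Cons.prems(2) w by (cases n) auto
  ultimately show ?case
    using w by (auto simp: in_stars_Cons)
qed simp

lemma prefix_power:
  "prefix z (concat (replicate n u)) \<Longrightarrow> \<exists>m y. z = concat (replicate m u) @ y \<and> prefix y u"
proof (induction n arbitrary: z)
  case (Suc n)
  then consider "prefix z u" | z' where "z = u @ z'" "prefix z' (concat (replicate n u))"
    by (auto simp: prefix_append)
  then show ?case
  proof cases
    case 1
    then show ?thesis by (intro exI[of _ 0]) auto
  next
    case 2
    with Suc.IH obtain m y where "z' = concat (replicate m u) @ y" "prefix y u" by blast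
    with 2 show ?thesis by (intro exI[of _ "Suc m"]) auto
  qed
qed simp

lemma sublist_power:
  "sublist z (concat (replicate n u)) \<Longrightarrow>
     \<exists>x m y. z = x @ concat (replicate m u) @ y \<and> sublist x u \<and> sublist y u"
proof (induction n arbitrary: z)
  case 0
  then show ?case by (intro exI[of _ "[]"] exI[of _ 0]) auto
next
  case (Suc n)
  then consider "sublist z u" | "sublist z (concat (replicate n u))"
    | z1 z2 where "z = z1 @ z2" "suffix z1 u" "prefix z2 (concat (replicate n u))"
    by (auto simp: sublist_append)
  then show ?case
  proof cases
    case 1
    then show ?thesis by (intro exI[of _ z] exI[of _ 0] exI[of _ "[]"]) auto
  next
    case 2
    then show ?thesis by (rule Suc.IH)
  next
    case 3
    with prefix_power obtain m y where "z2 = concat (replicate m u) @ y" "prefix y u" by blast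
    with 3 show ?thesis by auto
  qed
qed

definition factors :: "'a list \<Rightarrow> 'a list list" where
  "factors u = concat (map prefixes (suffixes u))"

lemma in_set_factors [simp]: "z \<in> set (factors u) \<longleftrightarrow> sublist z u"
  by (auto simp: factors_def sublist_altdef')

definition factor_blocks :: "'a list list \<Rightarrow> 'a list list" where
  "factor_blocks ws = concat (map (\<lambda>u. factors u @ u # factors u) ws)"

lemma factor_blocks_Cons: "factor_blocks (u # ws) = (factors u @ [u] @ factors u) @ factor_blocks ws"
  by (simp add: factor_blocks_def)

lemma in_stars_factors_power:
  assumes "sublist z (concat (replicate n u))"
  shows "in_stars (factors u @ [u] @ factors u) z"
proof -
  obtain x m y where "z = x @ concat (replicate m u) @ y" "sublist x u" "sublist y u"
    using sublist_power[OF assms] by blast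
  then show ?thesis
    by (simp only:) (intro in_stars_append in_stars_member in_stars_power; simp)
qed

lemma in_stars_sublist:
  "in_stars ws w \<Longrightarrow> sublist z w \<Longrightarrow> in_stars (factor_blocks ws) z"
proof (induction ws arbitrary: w z)
  case (Cons u ws)
  then obtain n r where w: "w = concat (replicate n u) @ r" and r: "in_stars ws r"
    by (auto simp: in_stars_Cons)
  from Cons.prems(2) consider "sublist z (concat (replicate n u))" | "sublist z r"
    | z1 z2 where "z = z1 @ z2" "suffix z1 (concat (replicate n u))" "prefix z2 r"
    unfolding w sublist_append by blast
  then show ?case
  proof cases
    case 1
    then show ?thesis unfolding factor_blocks_Cons
      using in_stars_append[OF in_stars_factors_power in_stars_empty_word] by fastforce
  next
    case 2
    then show ?thesis unfolding factor_blocks_Cons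
      using in_stars_append[OF in_stars_empty_word Cons.IH[OF r]] by (metis append_Nil)
  next
    case 3
    then show ?thesis unfolding factor_blocks_Cons
      using in_stars_append[OF in_stars_factors_power Cons.IH[OF r]] by blast
  qed
qed (simp add: factor_blocks_def)

definition prod_discrete_le :: "('s \<Rightarrow> 's \<Rightarrow> bool) \<Rightarrow> 's \<times> 'q \<Rightarrow> 's \<times> 'q \<Rightarrow> bool" where
  "prod_discrete_le r = (\<lambda>(s, q) (s', q'). r s s' \<and> q = q')"

lemma prod_discrete_le_Pair [simp]: "prod_discrete_le r (s, q) (s', q') \<longleftrightarrow> r s s' \<and> q = q'"
  by (simp add: prod_discrete_le_def)

lemma prod_discrete_le_iff: "prod_discrete_le r x y \<longleftrightarrow> r (fst x) (fst y) \<and> snd x = snd y"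
  by (cases x, cases y) simp

lemma partial_order_on_prod_discrete:
  assumes "partial_order_on S r"
  shows "partial_order_on (S \<times> Q) (prod_discrete_le r)"
  unfolding partial_order_on_def
proof (intro conjI ballI impI)
  fix x y z assume "x \<in> S \<times> Q" "y \<in> S \<times> Q" "z \<in> S \<times> Q"
  then have S: "fst x \<in> S" "fst y \<in> S" "fst z \<in> S" by auto
  show "prod_discrete_le r x x"
    using assms S unfolding partial_order_on_def prod_discrete_le_iff by blast
  show "x = y" if "prod_discrete_le r x y \<and> prod_discrete_le r y x"
    using assms S that unfolding partial_order_on_def prod_discrete_le_iff prod_eq_iff by blast
  show "prod_discrete_le r x z" if "prod_discrete_le r x y \<and> prod_discrete_le r y z"
    using assms S that unfolding partial_order_on_def prod_discrete_le_iff by metis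
qed

lemma directed_in_prod_discrete_iff:
  "directed_in (S \<times> Q) (prod_discrete_le r) D \<longleftrightarrow>
     (\<exists>D' q. D = D' \<times> {q} \<and> q \<in> Q \<and> directed_in S r D')"
proof
  assume dir: "directed_in (S \<times> Q) (prod_discrete_le r) D"
  then obtain p where p: "p \<in> D" unfolding directed_in_def by blast
  have snd_eq: "snd x = snd p" if "x \<in> D" for x
    using dir p that unfolding directed_in_def prod_discrete_le_iff by metis
  have "D = fst ` D \<times> {snd p}"
  proof
    show "D \<subseteq> fst ` D \<times> {snd p}"
      using snd_eq by (auto simp: mem_Times_iff intro: rev_image_eqI)
    show "fst ` D \<times> {snd p} \<subseteq> D"
      using snd_eq by clarsimp
  qed
  moreover have "directed_in S r (fst ` D)"
    unfolding directed_in_def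
  proof (intro conjI ballI)
    show "fst ` D \<subseteq> S" "fst ` D \<noteq> {}"
      using dir unfolding directed_in_def by auto
    fix x y assume "x \<in> fst ` D" "y \<in> fst ` D"
    then obtain x' y' where "x' \<in> D" "y' \<in> D" "x = fst x'" "y = fst y'" by blast
    then show "\<exists>z\<in>fst ` D. r x z \<and> r y z"
      using dir unfolding directed_in_def prod_discrete_le_iff by blast
  qed
  moreover have "snd p \<in> Q"
    using dir p unfolding directed_in_def by (auto simp: mem_Times_iff)
  ultimately show "\<exists>D' q. D = D' \<times> {q} \<and> q \<in> Q \<and> directed_in S r D'" by blast
qed (auto simp: directed_in_def)

lemma is_lub_in_prod_discrete_iff:
  assumes "D \<noteq> {}"
  shows "is_lub_in (S \<times> Q) (prod_discrete_le r) (D \<times> {q}) (d, q') \<longleftrightarrow>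
           q' = q \<and> q \<in> Q \<and> is_lub_in S r D d"
proof
  assume lub: "is_lub_in (S \<times> Q) (prod_discrete_le r) (D \<times> {q}) (d, q')"
  then have "q' = q" "q \<in> Q" "d \<in> S" "\<forall>y\<in>D. r y d"
    using assms unfolding is_lub_in_def by auto
  moreover have "r d z" if "z \<in> S" "\<forall>y\<in>D. r y z" for z
    using lub that \<open>q \<in> Q\<close> unfolding is_lub_in_def by force
  ultimately show "q' = q \<and> q \<in> Q \<and> is_lub_in S r D d"
    unfolding is_lub_in_def by blast
qed (use assms in \<open>auto simp: is_lub_in_def\<close>)

lemma dcpo_on_prod_discrete:
  assumes "dcpo_on S r"
  shows "dcpo_on (S \<times> Q) (prod_discrete_le r)"
  unfolding dcpo_on_def
proof (intro conjI allI impI)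
  show "partial_order_on (S \<times> Q) (prod_discrete_le r)"
    using assms partial_order_on_prod_discrete unfolding dcpo_on_def by blast
  fix D assume "directed_in (S \<times> Q) (prod_discrete_le r) D"
  then obtain D' q where D: "D = D' \<times> {q}" "q \<in> Q" "directed_in S r D'"
    unfolding directed_in_prod_discrete_iff by blast
  moreover obtain d where "is_lub_in S r D' d"
    using assms D(3) unfolding dcpo_on_def by blast
  moreover have "D' \<noteq> {}"
    using D(3) unfolding directed_in_def by blast
  ultimately have "is_lub_in (S \<times> Q) (prod_discrete_le r) D (d, q)"
    by (simp add: is_lub_in_prod_discrete_iff)
  then show "\<exists>p. is_lub_in (S \<times> Q) (prod_discrete_le r) D p" ..
qed

lemma directed_in_singleton: "partial_order_on S r \<Longrightarrow> x \<in> S \<Longrightarrow> directed_in S r {x}"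
  unfolding partial_order_on_def directed_in_def by blast

lemma is_lub_in_singleton: "partial_order_on S r \<Longrightarrow> x \<in> S \<Longrightarrow> is_lub_in S r {x} x"
  unfolding partial_order_on_def is_lub_in_def by blast

lemma way_below_prod_discrete_iff:
  assumes po: "partial_order_on S r" and "x \<in> S" "q \<in> Q"
  shows "way_below (S \<times> Q) (prod_discrete_le r) (y, q') (x, q) \<longleftrightarrow> q' = q \<and> way_below S r y x"
proof
  assume wb: "way_below (S \<times> Q) (prod_discrete_le r) (y, q') (x, q)"
  have lift: "\<exists>z\<in>D. r y z \<and> q' = q"
    if "directed_in S r D" "is_lub_in S r D d" "r x d" for D d
  proof -
    have "D \<noteq> {}" using that(1) unfolding directed_in_def by blast
    then have "is_lub_in (S \<times> Q) (prod_discrete_le r) (D \<times> {q}) (d, q)"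
      using that(2) \<open>q \<in> Q\<close> by (simp add: is_lub_in_prod_discrete_iff)
    moreover have "directed_in (S \<times> Q) (prod_discrete_le r) (D \<times> {q})"
      unfolding directed_in_prod_discrete_iff using that(1) \<open>q \<in> Q\<close> by blast
    ultimately show ?thesis
      using wb that(3) unfolding way_below_def by auto
  qed
  have "r x x"
    using po \<open>x \<in> S\<close> unfolding partial_order_on_def by blast
  then have "q' = q"
    using lift[OF directed_in_singleton[OF po \<open>x \<in> S\<close>] is_lub_in_singleton[OF po \<open>x \<in> S\<close>]]
    by blast
  moreover have "way_below S r y x"
    unfolding way_below_def by (blast dest: lift)
  ultimately show "q' = q \<and> way_below S r y x" ..
next
  assume "q' = q \<and> way_below S r y x"
  then have "q' = q" and wb: "way_below S r y x" by blast+
  show "way_below (S \<times> Q) (prod_discrete_le r) (y, q') (x, q)"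
    unfolding way_below_def
  proof (intro allI impI)
    fix D p
    assume dir: "directed_in (S \<times> Q) (prod_discrete_le r) D"
      and lub: "is_lub_in (S \<times> Q) (prod_discrete_le r) D p"
      and le: "prod_discrete_le r (x, q) p"
    obtain D' q1 where D: "D = D' \<times> {q1}" "directed_in S r D'"
      using dir unfolding directed_in_prod_discrete_iff by blast
    then have "D' \<noteq> {}" unfolding directed_in_def by blast
    then have "snd p = q1" "is_lub_in S r D' (fst p)"
      using lub D(1) is_lub_in_prod_discrete_iff[of D' S Q r q1 "fst p" "snd p"] by simp_all
    moreover have "r x (fst p)" "q = snd p"
      using le unfolding prod_discrete_le_iff by simp_all
    ultimately obtain z where "z \<in> D'" "r y z"
      using wb D(2) unfolding way_below_def by blast
    then show "\<exists>z\<in>D. prod_discrete_le r (y, q') z"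
      using D(1) \<open>q' = q\<close> \<open>q = snd p\<close> \<open>snd p = q1\<close> by auto
  qed
qed

lemma continuous_dcpo_on_prod_discrete:
  assumes "continuous_dcpo_on S r"
  shows "continuous_dcpo_on (S \<times> Q) (prod_discrete_le r)"
  unfolding continuous_dcpo_on_def
proof (intro conjI ballI)
  have dcpo: "dcpo_on S r"
    using assms unfolding continuous_dcpo_on_def by blast
  then show "dcpo_on (S \<times> Q) (prod_discrete_le r)"
    by (rule dcpo_on_prod_discrete)
  have po: "partial_order_on S r"
    using dcpo unfolding dcpo_on_def by blast
  fix p assume "p \<in> S \<times> Q"
  then obtain x q where p: "p = (x, q)" "x \<in> S" "q \<in> Q" by blast
  let ?B = "{y \<in> S. way_below S r y x}"
  have approx: "{y \<in> S \<times> Q. way_below (S \<times> Q) (prod_discrete_le r) y p} = ?B \<times> {q}"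
    using way_below_prod_discrete_iff[OF po p(2,3)] p(1,3) by auto
  have "directed_in S r ?B" "is_lub_in S r ?B x"
    using assms p(2) unfolding continuous_dcpo_on_def by blast+
  moreover have "?B \<noteq> {}"
    using \<open>directed_in S r ?B\<close> unfolding directed_in_def by blast
  ultimately show
    "directed_in (S \<times> Q) (prod_discrete_le r)
       {y \<in> S \<times> Q. way_below (S \<times> Q) (prod_discrete_le r) y p}"
    "is_lub_in (S \<times> Q) (prod_discrete_le r)
       {y \<in> S \<times> Q. way_below (S \<times> Q) (prod_discrete_le r) y p} p"
    unfolding approx unfolding p(1) directed_in_prod_discrete_iff using p(3)
    by (auto simp: is_lub_in_prod_discrete_iff)
qed

lemma wpo_on_prod_discrete:
  assumes wpo: "wpo_on S r" and "finite Q"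
  shows "wpo_on (S \<times> Q) (prod_discrete_le r)"
  unfolding wpo_on_def
proof (intro conjI allI impI)
  show "partial_order_on (S \<times> Q) (prod_discrete_le r)"
    using wpo partial_order_on_prod_discrete unfolding wpo_on_def by blast
  fix x :: "nat \<Rightarrow> _" assume x: "\<forall>n. x n \<in> S \<times> Q"
  have "range (\<lambda>n. snd (x n)) \<subseteq> Q"
    using x by (auto simp: mem_Times_iff)
  then have "finite (range (\<lambda>n. snd (x n)))"
    using \<open>finite Q\<close> finite_subset by blast
  then obtain n0 where N: "infinite {n. snd (x n) = snd (x n0)}"
    using pigeonhole_infinite[of "UNIV :: nat set"] by auto
  let ?e = "enumerate {n. snd (x n) = snd (x n0)}"
  have "\<forall>n. fst (x (?e n)) \<in> S"
    using x by (simp add: mem_Times_iff)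
  then obtain i j where "i < j" "r (fst (x (?e i))) (fst (x (?e j)))"
    using wpo unfolding wpo_on_def by (elim conjE allE[of _ "\<lambda>n. fst (x (?e n))"]) blast
  moreover have "?e i < ?e j"
    using enumerate_mono[OF \<open>i < j\<close> N] .
  moreover have "snd (x (?e i)) = snd (x (?e j))"
    using enumerate_in_set[OF N] by simp
  ultimately show "\<exists>i j. i < j \<and> prod_discrete_le r (x i) (x j)"
    unfolding prod_discrete_le_iff by (intro exI[of _ "?e i"] exI[of _ "?e j"]) simp
qed

lemma scott_continuous_map_fst:
  "scott_continuous_map (S \<times> Q) (prod_discrete_le r) S r fst"
  unfolding scott_continuous_map_def
proof (intro conjI allI impI)
  show "fst ` (S \<times> Q) \<subseteq> S" by auto
  fix D p
  assume "directed_in (S \<times> Q) (prod_discrete_le r) D"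
    and lub: "is_lub_in (S \<times> Q) (prod_discrete_le r) D p"
  then obtain D' q where D: "D = D' \<times> {q}" "directed_in S r D'"
    unfolding directed_in_prod_discrete_iff by blast
  then have "D' \<noteq> {}" unfolding directed_in_def by blast
  then show "is_lub_in S r (fst ` D) (fst p)"
    using lub D(1) by (cases p) (simp add: is_lub_in_prod_discrete_iff)
qed

definition pair_pmap :: "('s \<Rightarrow> 's option) \<Rightarrow> ('q \<Rightarrow> 'q option) \<Rightarrow> 's \<times> 'q \<Rightarrow> ('s \<times> 'q) option" where
  "pair_pmap g h = (\<lambda>(s, q). case g s of None \<Rightarrow> None
     | Some s' \<Rightarrow> (case h q of None \<Rightarrow> None | Some q' \<Rightarrow> Some (s', q')))"

lemma pair_pmap_eq_Some:
  "pair_pmap g h (s, q) = Some p \<longleftrightarrow> (\<exists>s' q'. g s = Some s' \<and> h q = Some q' \<and> p = (s', q'))"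
  by (auto simp: pair_pmap_def split: option.splits)

lemma pdom_pair_pmap: "pdom (pair_pmap g h) = pdom g \<times> pdom h"
  by (auto simp: pdom_def pair_pmap_def split: option.splits)

lemma pair_pmap_apply:
  "s \<in> pdom g \<Longrightarrow> q \<in> pdom h \<Longrightarrow> pair_pmap g h (s, q) = Some (the (g s), the (h q))"
  by (auto simp: pdom_def pair_pmap_def)

lemma scott_open_in_prod_discrete:
  assumes U: "scott_open_in S r U" and "V \<subseteq> Q"
  shows "scott_open_in (S \<times> Q) (prod_discrete_le r) (U \<times> V)"
  unfolding scott_open_in_def
proof (intro conjI ballI allI impI)
  show "U \<times> V \<subseteq> S \<times> Q"
    using U \<open>V \<subseteq> Q\<close> unfolding scott_open_in_def by blast
  show "y \<in> U \<times> V" if "x \<in> U \<times> V" "y \<in> S \<times> Q" "prod_discrete_le r x y" for x y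
    using U that unfolding scott_open_in_def prod_discrete_le_iff mem_Times_iff by metis
  fix D p
  assume dir: "directed_in (S \<times> Q) (prod_discrete_le r) D"
    and lub: "is_lub_in (S \<times> Q) (prod_discrete_le r) D p" and "p \<in> U \<times> V"
  obtain D' q where D: "D = D' \<times> {q}" "directed_in S r D'"
    using dir unfolding directed_in_prod_discrete_iff by blast
  then have "D' \<noteq> {}" unfolding directed_in_def by blast
  then obtain d where p: "p = (d, q)" "is_lub_in S r D' d"
    using lub D(1) by (cases p) (auto simp: is_lub_in_prod_discrete_iff)
  with \<open>p \<in> U \<times> V\<close> obtain s where "s \<in> D'" "s \<in> U"
    using U D(2) unfolding scott_open_in_def by blast
  then have "(s, q) \<in> D \<inter> (U \<times> V)"
    using D(1) p(1) \<open>p \<in> U \<times> V\<close> by simp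
  then show "D \<inter> (U \<times> V) \<noteq> {}" by blast
qed

lemma partial_continuous_on_pair_pmap:
  assumes g: "partial_continuous_on S r g"
    and h: "\<And>q q'. h q = Some q' \<Longrightarrow> q \<in> Q \<and> q' \<in> Q"
  shows "partial_continuous_on (S \<times> Q) (prod_discrete_le r) (pair_pmap g h)"
  unfolding partial_continuous_on_def
proof (intro conjI ballI allI impI)
  have open_g: "scott_open_in S r (pdom g)"
    using g unfolding partial_continuous_on_def by blast
  have h_dom: "pdom h \<subseteq> Q"
    using h by (auto simp: pdom_def)
  have h_ran: "the (h q) \<in> Q" if "q \<in> pdom h" for q
    using h that by (auto simp: pdom_def)
  show "scott_open_in (S \<times> Q) (prod_discrete_le r) (pdom (pair_pmap g h))"
    unfolding pdom_pair_pmap by (rule scott_open_in_prod_discrete[OF open_g h_dom])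
  show "the (pair_pmap g h p) \<in> S \<times> Q" if "p \<in> pdom (pair_pmap g h)" for p
    using that g h_ran unfolding partial_continuous_on_def pdom_pair_pmap
    by (auto simp: pair_pmap_apply)
  fix D p
  assume dir: "directed_in (S \<times> Q) (prod_discrete_le r) D"
    and D_dom: "D \<subseteq> pdom (pair_pmap g h)"
    and lub: "is_lub_in (S \<times> Q) (prod_discrete_le r) D p"
  obtain D' q where D: "D = D' \<times> {q}" "directed_in S r D'"
    using dir unfolding directed_in_prod_discrete_iff by blast
  then have "D' \<noteq> {}" unfolding directed_in_def by blast
  then obtain d where p: "p = (d, q)" "is_lub_in S r D' d"
    using lub D(1) by (cases p) (auto simp: is_lub_in_prod_discrete_iff)
  have "D' \<subseteq> pdom g" "q \<in> pdom h"
    using D_dom D(1) \<open>D' \<noteq> {}\<close> unfolding pdom_pair_pmap by auto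
  obtain s where "s \<in> D'"
    using \<open>D' \<noteq> {}\<close> by blast
  then have "d \<in> pdom g"
    using open_g p(2) \<open>D' \<subseteq> pdom g\<close> unfolding scott_open_in_def is_lub_in_def by blast
  have image: "(\<lambda>p. the (pair_pmap g h p)) ` D = (\<lambda>s. the (g s)) ` D' \<times> {the (h q)}"
    using \<open>D' \<subseteq> pdom g\<close> \<open>q \<in> pdom h\<close> D(1) by (force simp: pair_pmap_apply)
  have "is_lub_in S r ((\<lambda>s. the (g s)) ` D') (the (g d))"
    using g D(2) \<open>D' \<subseteq> pdom g\<close> p(2) unfolding partial_continuous_on_def by blast
  then show "is_lub_in (S \<times> Q) (prod_discrete_le r) ((\<lambda>p. the (pair_pmap g h p)) ` D)
      (the (pair_pmap g h p))"
    using \<open>D' \<noteq> {}\<close> \<open>d \<in> pdom g\<close> \<open>q \<in> pdom h\<close> h_ran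
    by (subst p(1), simp add: image pair_pmap_apply is_lub_in_prod_discrete_iff)
qed

lemma drun_append:
  "drun \<delta> q (u @ w) = (case drun \<delta> q u of None \<Rightarrow> None | Some q' \<Rightarrow> drun \<delta> q' w)"
  by (induction u arbitrary: q) (auto split: option.splits)

lemma drun_Some_set_subset:
  "(\<And>q f q'. \<delta> q f = Some q' \<Longrightarrow> f \<in> F) \<Longrightarrow> drun \<delta> q u = Some q' \<Longrightarrow> set u \<subseteq> F"
  by (induction u arbitrary: q) (auto split: option.splits)

lemma drun_if_run_pair_pmap:
  "run (\<lambda>f. pair_pmap (a f) (\<lambda>q. \<delta> q f)) w (s, q) \<noteq> None \<Longrightarrow> drun \<delta> q w \<noteq> None"
proof (induction w arbitrary: s q)
  case (Cons f w)
  then obtain p where "pair_pmap (a f) (\<lambda>q. \<delta> q f) (s, q) = Some p"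
    and "run (\<lambda>f. pair_pmap (a f) (\<lambda>q. \<delta> q f)) w p \<noteq> None"
    by (auto split: option.splits)
  then obtain s' q' where "\<delta> q f = Some q'"
    and "run (\<lambda>f. pair_pmap (a f) (\<lambda>q. \<delta> q f)) w (s', q') \<noteq> None"
    by (auto simp: pair_pmap_eq_Some)
  with Cons.IH show ?case by simp
qed simp

lemma sync_product_simps:
  "states (sync_product \<Sigma> Q \<delta>) = states \<Sigma> \<times> Q"
  "le (sync_product \<Sigma> Q \<delta>) = prod_discrete_le (le \<Sigma>)"
  "trans (sync_product \<Sigma> Q \<delta>) = {f \<in> trans \<Sigma>. \<exists>q\<in>Q. \<delta> q f \<noteq> None}"
  "app (sync_product \<Sigma> Q \<delta>) = (\<lambda>f. pair_pmap (app \<Sigma> f) (\<lambda>q. \<delta> q f))"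
  by (simp_all add: sync_product_def prod_discrete_le_def pair_pmap_def)

lemma complete_fts_sync_product:
  assumes "complete_fts \<Sigma>" and "finite Q"
    and \<delta>: "\<And>q f q'. \<delta> q f = Some q' \<Longrightarrow> q \<in> Q \<and> q' \<in> Q"
  shows "complete_fts (sync_product \<Sigma> Q \<delta>)"
  using assms unfolding complete_fts_def sync_product_simps
  by (auto intro: wpo_on_prod_discrete continuous_dcpo_on_prod_discrete
      partial_continuous_on_pair_pmap)

lemma flat_sync_product:
  assumes "rl_automaton (trans \<Sigma>) Q \<delta> q0"
  shows "flat (sync_product \<Sigma> Q \<delta>)"
proof -
  let ?T = "{f \<in> trans \<Sigma>. \<exists>q\<in>Q. \<delta> q f \<noteq> None}"
  obtain ws
    where lang: "\<And>w. set w \<subseteq> trans \<Sigma> \<Longrightarrow> drun \<delta> q0 w \<noteq> None \<Longrightarrow> \<exists>v. in_stars ws (w @ v)"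
    using assms unfolding rl_automaton_def by blast
  have "in_stars (factor_blocks ws) w" if fireable: "fireable (sync_product \<Sigma> Q \<delta>) w" for w
  proof -
    obtain s q where "q \<in> Q"
      and run: "run (\<lambda>f. pair_pmap (app \<Sigma> f) (\<lambda>q. \<delta> q f)) w (s, q) \<noteq> None"
      using fireable unfolding fireable_def sync_product_simps by fastforce
    from drun_if_run_pair_pmap[OF run] have "drun \<delta> q w \<noteq> None" .
    moreover obtain u where u: "drun \<delta> q0 u = Some q"
      using assms \<open>q \<in> Q\<close> unfolding rl_automaton_def by blast
    moreover have "set u \<subseteq> trans \<Sigma>" "set w \<subseteq> trans \<Sigma>"
      using assms u fireable drun_Some_set_subset[of \<delta> "trans \<Sigma>" q0 u q]
      unfolding rl_automaton_def fireable_def sync_product_simps by blast+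
    ultimately obtain v where "in_stars ws (u @ w @ v)"
      using lang[of "u @ w"] by (auto simp: drun_append)
    then show ?thesis
      by (rule in_stars_sublist) simp
  qed
  moreover have "set w \<subseteq> ?T" if "fireable (sync_product \<Sigma> Q \<delta>) w" for w
    using that unfolding fireable_def sync_product_simps by blast
  ultimately have "in_stars (filter (\<lambda>u. set u \<subseteq> ?T) (factor_blocks ws)) w"
    if "fireable (sync_product \<Sigma> Q \<delta>) w" for w
    using that by (simp add: in_stars_filter)
  moreover have "set (concat (filter (\<lambda>u. set u \<subseteq> ?T) (factor_blocks ws))) \<subseteq> ?T"
    by auto
  ultimately show ?thesis
    unfolding flat_def sync_product_simps by blast
qed

lemma fts_morphism_sync_product_fst: "fts_morphism (sync_product \<Sigma> Q \<delta>) \<Sigma> fst id"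
  unfolding fts_morphism_def sync_product_simps
  by (auto simp: pair_pmap_eq_Some)

theorem lemma5p14:
  fixes \<Sigma> :: "('s, 'l) fts" and Q :: "'q set" and \<delta> :: "'q \<Rightarrow> 'l \<Rightarrow> 'q option" and q0 :: 'q
  assumes "complete_fts \<Sigma>"
    and "rl_automaton (trans \<Sigma>) Q \<delta> q0"
  shows "continuous_flattening \<Sigma> fst id (sync_product \<Sigma> Q \<delta>)"
proof -
  have "finite Q" and \<delta>: "\<And>q f q'. \<delta> q f = Some q' \<Longrightarrow> q \<in> Q \<and> q' \<in> Q"
    using assms(2) unfolding rl_automaton_def by blast+
  show ?thesis
    unfolding continuous_flattening_def
    using complete_fts_sync_product[OF assms(1) \<open>finite Q\<close> \<delta>] flat_sync_product[OF assms(2)]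
      fts_morphism_sync_product_fst scott_continuous_map_fst[of "states \<Sigma>" Q "le \<Sigma>"]
    by (simp add: sync_product_simps)
qed

end
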